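(* For every real $\lambda$, the sequence $\mathbf E\,e^{\lambda\hat Y_n}$ is nondecreasing in $n\ge0$ and converges to $\mathbf E\,e^{\lambda Y}$ as $n\to\infty$. In particular, $\mathbf E\,e^{\lambda\hat Y_n}\le\mathbf E\,e^{\lambda Y}$ for all $n\ge0$ and all $\lambda \in\mathbb R$.
   Context: Let $X_n$ be the number of comparisons used by randomized Quicksort (uniform random pivot) on $n$ distinct numbers. Equivalently, $X_0=0$ and $$X_n\stackrel{d}{=}X_{U_n-1}+X^*_{n-U_n}+n-1,$$ with $U_n$ uniform on $\{1,\dots,n\}$, $X_j^*\stackrel{d}{=}X_j$, all independent. Let $\mu_n=\mathbf EX_n=2(n+1)H_n-4n$, where $H_n=\sum_{k\le n}1/k$. For $n \ge 0$ let $\hat Y_n:=(X_n-\mu_n)/(n+1)$ (so $\hat Y_0=0$). $Y$ is the distributional limit of $(X_n-\mu_n)/n$. Its law is the unique law with mean $0$ and finite variance satisfying $Y\stackrel{d}{=}UY+(1-U)Y^*+C(U)$, where $U\sim\mathrm{unif}(0,1)$, $Y^*\stackrel{d}{=}Y$, $U,Y,Y^*$ are independent, and $C(u)=2u\ln u+2(1-u)\ln(1-u)+1$. *)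

theory Defs
  imports "HOL-Probability.Probability"
begin

text \<open>Law of the number of comparisons X_n of randomized Quicksort on n distinct keys:
  X_0 = 0 and X_n = X_{U_n - 1} + X*_{n - U_n} + n - 1 with U_n uniform on {1..n},
  all independent.\<close>
function qs_comparisons :: "nat \<Rightarrow> nat pmf" where
  "qs_comparisons n =
     (if n = 0 then return_pmf 0
      else do {
        u \<leftarrow> pmf_of_set {1..n};
        a \<leftarrow> qs_comparisons (u - 1);
        b \<leftarrow> qs_comparisons (n - u);
        return_pmf (a + b + n - 1)
      })"
  by pat_completeness auto
termination
  by (relation "Wellfounded.measure id") (auto simp: set_pmf_of_set)

text \<open>mu_n = E X_n = 2(n+1)H_n - 4n.\<close>
definition qs_mean :: "nat \<Rightarrow> real" where
  "qs_mean n = 2 * (real n + 1) * harm n - 4 * real n"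

text \<open>Normalization hat Y_n = (X_n - mu_n)/(n+1), as a function of the value of X_n.\<close>
definition qs_hatY :: "nat \<Rightarrow> nat \<Rightarrow> real" where
  "qs_hatY n x = (real x - qs_mean n) / (real n + 1)"

definition qs_normalized_law :: "nat \<Rightarrow> real measure" where
  "qs_normalized_law n =
     distr (measure_pmf (qs_comparisons n)) borel (\<lambda>x. (real x - qs_mean n) / real n)"

end

theory Submission
  imports Defs
begin

text \<open>Write \<open>Y(k)\<close> for the normalized cost \<open>qs_hatY k\<close> of \<open>k\<close> keys. Conditioning on the rank \<open>u\<close>
  of the first pivot gives \<open>Y(n) = u/(n+1) \<cdot> Y(u-1) + (n+1-u)/(n+1) \<cdot> Y'(n-u) + qs_toll n u\<close> with
  independent copies. Splitting \<open>n + 1\<close> keys at ranks \<open>u + 1\<close> and \<open>u\<close> and mixing with weights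
  \<open>u/(n+1)\<close> and \<open>(n+1-u)/(n+1)\<close> reproduces these coefficients, so Jensen's inequality and induction
  show that \<open>Y(n)\<close> increases in the convex order; in particular \<open>E exp(\<lambda> Y(n))\<close> is nondecreasing.
  These moment generating functions are bounded in \<open>n\<close>: the recurrence gives \<open>exp(64 \<lambda>\<^sup>2)\<close> for
  \<open>\<bar>\<lambda>\<bar> \<le> 1/16\<close>, and a H\<ouml>lder argument doubles the admissible range of \<open>\<lambda>\<close>. Since
  \<open>(X\<^sub>n - \<mu>\<^sub>n)/n = (1 + 1/n) \<cdot> Y(n)\<close>, the bound on \<open>E exp(2 \<lambda> Y(n))\<close> makes \<open>exp(\<lambda> \<cdot>)\<close> uniformly
  integrable along the weakly convergent laws, which yields convergence to \<open>E exp(\<lambda> Y)\<close>;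
  monotonicity then gives the inequality.\<close>

section \<open>Expectations under the Quicksort recurrence\<close>

declare qs_comparisons.simps [simp del]

lemma qs_comparisons_0 [simp]: "qs_comparisons 0 = return_pmf 0"
  by (simp add: qs_comparisons.simps)

lemma qs_comparisons_pos:
  "n > 0 \<Longrightarrow> qs_comparisons n =
     pmf_of_set {1..n} \<bind> (\<lambda>u. qs_comparisons (u - 1) \<bind>
       (\<lambda>a. qs_comparisons (n - u) \<bind> (\<lambda>b. return_pmf (a + b + n - 1))))"
  by (subst qs_comparisons.simps) simp

lemma qs_comparisons_1 [simp]: "qs_comparisons (Suc 0) = return_pmf 0"
  by (simp add: qs_comparisons_pos pmf_of_set_singleton bind_return_pmf)

lemma finite_set_pmf_qs_comparisons [simp]: "finite (set_pmf (qs_comparisons n))"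
proof (induction n rule: less_induct)
  case (less n)
  then show ?case
    by (cases "n = 0") (auto simp: qs_comparisons_pos set_pmf_of_set)
qed

abbreviation qs_expectation :: "nat \<Rightarrow> (nat \<Rightarrow> real) \<Rightarrow> real" where
  "qs_expectation n f \<equiv> measure_pmf.expectation (qs_comparisons n) f"

lemma integrable_qs_comparisons [simp]:
  "integrable (measure_pmf (qs_comparisons n)) (f :: nat \<Rightarrow> real)"
  by (simp add: integrable_measure_pmf_finite)

lemma expectation_bind_pmf_finite:
  fixes h :: "'b \<Rightarrow> real"
  assumes "finite (set_pmf p)" "\<And>x. x \<in> set_pmf p \<Longrightarrow> finite (set_pmf (f x))"
  shows "measure_pmf.expectation (p \<bind> f) h =
           measure_pmf.expectation p (\<lambda>x. measure_pmf.expectation (f x) h)"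
  using assms by (simp add: pmf_expectation_bind[of "set_pmf p"] integral_measure_pmf[of "set_pmf p"])

lemma qs_expectation_rec:
  assumes "n > 0"
  shows "qs_expectation n h =
    (\<Sum>u=1..n. qs_expectation (u - 1) (\<lambda>a. qs_expectation (n - u) (\<lambda>b. h (a + b + n - 1)))) / real n"
  using assms
  by (simp add: qs_comparisons_pos expectation_bind_pmf_finite integral_pmf_of_set)

section \<open>The toll function\<close>

lemma qs_mean_0 [simp]: "qs_mean 0 = 0"
  by (simp add: qs_mean_def harm_expand)

lemma qs_mean_Suc:
  "real (Suc k) * qs_mean (Suc k) = (real k + 2) * qs_mean k + 2 * real k"
  by (simp add: qs_mean_def harm_Suc field_simps)

lemma sum_qs_mean: "2 * (\<Sum>k<n. qs_mean k) = real n * qs_mean n - real n * (real n - 1)"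
proof (induction n)
  case (Suc n)
  then show ?case
    using qs_mean_Suc[of n] by (simp add: algebra_simps)
qed simp

text \<open>With this toll, \<open>qs_hatY_split\<close> below is the finite-\<open>n\<close> form of the fixed-point equation
  \<open>Y = U Y + (1 - U) Y' + C(U)\<close>, \<open>qs_toll n u\<close> playing the role of \<open>C(u/n)\<close>.\<close>
definition qs_toll :: "nat \<Rightarrow> nat \<Rightarrow> real" where
  "qs_toll n u = (qs_mean (u - 1) + qs_mean (n - u) + real n - 1 - qs_mean n) / (real n + 1)"

lemma qs_hatY_split:
  assumes "1 \<le> u" "u \<le> n"
  shows "qs_hatY n (a + b + n - 1) =
           real u / (real n + 1) * qs_hatY (u - 1) a
         + (real n + 1 - real u) / (real n + 1) * qs_hatY (n - u) b + qs_toll n u"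
proof -
  have u: "real (u - 1) + 1 = real u" and nu: "real (n - u) + 1 = real n + 1 - real u"
    and abn: "real (a + b + n - 1) = real a + real b + real n - 1"
    using assms by (auto simp: of_nat_diff)
  have "real u > 0" "real n + 1 - real u > 0"
    using assms by auto
  then show ?thesis
    unfolding qs_hatY_def qs_toll_def u nu abn
    by (simp add: add_divide_distrib[symmetric] diff_divide_distrib[symmetric])
qed

lemma qs_toll_Suc_combination:
  assumes "1 \<le> u" "u \<le> n"
  shows "real u * qs_toll (Suc n) (Suc u) + (real n + 1 - real u) * qs_toll (Suc n) u
           = (real n + 1) * qs_toll n u"
proof -
  obtain v w where v: "u = Suc v" and w: "n = v + 1 + w"
    using assms by (metis Suc_eq_plus1 le_Suc_ex not0_implies_Suc not_one_le_zero)
  have idx: "Suc n - Suc u = w" "Suc u - 1 = Suc v" "n - u = w" "Suc n - u = Suc w" "u - 1 = v"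
    using v w by auto
  define X where "X = qs_mean (Suc v) + qs_mean w + real (Suc n) - 1 - qs_mean (Suc n)"
  define Y where "Y = qs_mean v + qs_mean (Suc w) + real (Suc n) - 1 - qs_mean (Suc n)"
  define Z where "Z = qs_mean v + qs_mean w + real n - 1 - qs_mean n"
  have "real u * (X / (real n + 2)) + (real n + 1 - real u) * (Y / (real n + 2))
      = (real u * X + (real n + 1 - real u) * Y) / (real n + 2)"
    by (simp add: add_divide_distrib)
  also have "real u * X + (real n + 1 - real u) * Y = (real n + 2) * Z"
    using qs_mean_Suc[of v] qs_mean_Suc[of w] qs_mean_Suc[of n]
    unfolding X_def Y_def Z_def v w by (simp add: algebra_simps)
  finally have "real u * (X / (real n + 2)) + (real n + 1 - real u) * (Y / (real n + 2)) = Z"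
    by simp
  then show ?thesis
    unfolding qs_toll_def idx X_def Y_def Z_def by (simp add: add_ac)
qed

lemma sum_qs_toll:
  assumes "n > 0"
  shows "(\<Sum>u=1..n. qs_toll n u) = 0"
proof -
  have lower: "(\<Sum>u=1..n. qs_mean (u - 1)) = (\<Sum>k<n. qs_mean k)"
    using sum.atLeast1_atMost_eq[of "\<lambda>u. qs_mean (u - 1)" n] by simp
  have upper: "(\<Sum>u=1..n. qs_mean (n - u)) = (\<Sum>k<n. qs_mean k)"
    using sum.atLeast1_atMost_eq[of "\<lambda>u. qs_mean (n - u)" n] sum.nat_diff_reindex[of qs_mean n]
    by simp
  have "(\<Sum>u=1..n. qs_toll n u) =
      (\<Sum>u=1..n. qs_mean (u - 1) + qs_mean (n - u) + (real n - 1 - qs_mean n)) / (real n + 1)"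
    unfolding qs_toll_def by (simp add: sum_divide_distrib[symmetric] algebra_simps)
  also have "\<dots> = (2 * (\<Sum>k<n. qs_mean k) + real n * (real n - 1 - qs_mean n)) / (real n + 1)"
    by (simp only: sum.distrib lower upper) simp
  also have "\<dots> = 0"
    unfolding sum_qs_mean by (simp add: algebra_simps)
  finally show ?thesis .
qed

lemma harm_diff_bounds:
  assumes "v < n"
  shows "1 \<le> (real v + 1) * (harm n - harm v)" "(real v + 1) * (harm n - harm v) \<le> real (n - v)"
proof -
  have "harm (Suc v) \<le> (harm n :: real)"
    using assms by (intro harm_mono) simp
  then show "1 \<le> (real v + 1) * (harm n - harm v)"
    by (simp add: harm_Suc field_simps)
  have "harm n - harm v = (\<Sum>k\<in>{Suc v..n}. 1 / real k :: real)"
    using sum.ub_add_nat[of 1 v "\<lambda>k. 1 / real k" "n - v"] assms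
    by (simp add: harm_def inverse_eq_divide)
  also have "\<dots> \<le> (\<Sum>k\<in>{Suc v..n}. 1 / (real v + 1))"
    by (intro sum_mono) (simp add: frac_le)
  finally show "(real v + 1) * (harm n - harm v) \<le> real (n - v)"
    by (simp add: field_simps)
qed

lemma abs_qs_toll_le_1:
  assumes "1 \<le> u" "u \<le> n"
  shows "\<bar>qs_toll n u\<bar> \<le> 1"
proof -
  obtain v w where v: "u = Suc v" and w: "n = v + 1 + w"
    using assms by (metis Suc_eq_plus1 le_Suc_ex not0_implies_Suc not_one_le_zero)
  have "n - u = w" "u - 1 = v" "n - v = Suc w" "n - w = Suc v"
    using v w by auto
  moreover have "qs_mean v + qs_mean w + real n - 1 - qs_mean n =
      real n + 3 - 2 * ((real v + 1) * (harm n - harm v)) - 2 * ((real w + 1) * (harm n - harm w))"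
    unfolding qs_mean_def w by (simp add: algebra_simps)
  moreover note harm_diff_bounds[of v n] harm_diff_bounds[of w n]
  ultimately show ?thesis
    using w unfolding qs_toll_def by (auto simp: abs_le_iff field_simps)
qed

section \<open>Convex order\<close>

lemma convex_on_affine_comp:
  fixes \<phi> :: "real \<Rightarrow> real"
  assumes "convex_on UNIV \<phi>"
  shows "convex_on UNIV (\<lambda>t. \<phi> (\<alpha> * t + c))"
proof (rule convex_onI)
  fix t x y :: real
  assume "0 < t" "t < 1"
  then have "\<phi> ((1 - t) *\<^sub>R (\<alpha> * x + c) + t *\<^sub>R (\<alpha> * y + c))
      \<le> (1 - t) * \<phi> (\<alpha> * x + c) + t * \<phi> (\<alpha> * y + c)"
    by (intro convex_onD[OF assms]) auto
  then show "\<phi> (\<alpha> * ((1 - t) *\<^sub>R x + t *\<^sub>R y) + c) \<le> (1 - t) * \<phi> (\<alpha> * x + c) + t * \<phi> (\<alpha> * y + c)"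
    by (simp add: algebra_simps)
qed simp

lemma convex_on_expectation_pmf:
  fixes F :: "'a \<Rightarrow> real \<Rightarrow> real"
  assumes "finite (set_pmf p)" "\<And>x. convex_on UNIV (F x)"
  shows "convex_on UNIV (\<lambda>t. measure_pmf.expectation p (\<lambda>x. F x t))"
proof (rule convex_onI)
  fix t y z :: real
  assume "0 < t" "t < 1"
  then have "measure_pmf.expectation p (\<lambda>x. F x ((1 - t) *\<^sub>R y + t *\<^sub>R z))
      \<le> measure_pmf.expectation p (\<lambda>x. (1 - t) * F x y + t * F x z)"
    using assms by (intro integral_mono convex_onD[OF assms(2)] integrable_measure_pmf_finite) auto
  also have "\<dots> = (1 - t) * measure_pmf.expectation p (\<lambda>x. F x y) + t * measure_pmf.expectation p (\<lambda>x. F x z)"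
    using assms(1) by (simp add: integrable_measure_pmf_finite)
  finally show "measure_pmf.expectation p (\<lambda>x. F x ((1 - t) *\<^sub>R y + t *\<^sub>R z))
      \<le> (1 - t) * measure_pmf.expectation p (\<lambda>x. F x y) + t * measure_pmf.expectation p (\<lambda>x. F x z)" .
qed simp

definition qs_convex_step :: "nat \<Rightarrow> bool" where
  "qs_convex_step n \<longleftrightarrow> (\<forall>\<phi>. convex_on UNIV \<phi> \<longrightarrow>
     qs_expectation n (\<lambda>x. \<phi> (qs_hatY n x)) \<le> qs_expectation (Suc n) (\<lambda>x. \<phi> (qs_hatY (Suc n) x)))"

lemma qs_convex_stepD:
  "qs_convex_step n \<Longrightarrow> convex_on UNIV \<phi> \<Longrightarrow>
     qs_expectation n (\<lambda>x. \<phi> (qs_hatY n x)) \<le> qs_expectation (Suc n) (\<lambda>x. \<phi> (qs_hatY (Suc n) x))"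
  unfolding qs_convex_step_def by blast

lemma qs_convex_step_left:
  assumes "qs_convex_step j" "convex_on UNIV \<phi>"
  shows "qs_expectation j (\<lambda>a. qs_expectation k (\<lambda>b. \<phi> (\<alpha> * qs_hatY j a + \<beta> * qs_hatY k b + c)))
    \<le> qs_expectation (Suc j) (\<lambda>a. qs_expectation k (\<lambda>b. \<phi> (\<alpha> * qs_hatY (Suc j) a + \<beta> * qs_hatY k b + c)))"
proof -
  have "convex_on UNIV (\<lambda>t. qs_expectation k (\<lambda>b. \<phi> (\<alpha> * t + (\<beta> * qs_hatY k b + c))))"
    by (intro convex_on_expectation_pmf convex_on_affine_comp assms) simp
  from qs_convex_stepD[OF assms(1) this] show ?thesis
    by (simp add: add.assoc)
qed

lemma qs_convex_step_right:
  assumes "qs_convex_step k" "convex_on UNIV \<phi>"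
  shows "qs_expectation j (\<lambda>a. qs_expectation k (\<lambda>b. \<phi> (\<alpha> * qs_hatY j a + \<beta> * qs_hatY k b + c)))
    \<le> qs_expectation j (\<lambda>a. qs_expectation (Suc k) (\<lambda>b. \<phi> (\<alpha> * qs_hatY j a + \<beta> * qs_hatY (Suc k) b + c)))"
proof (intro integral_mono integrable_qs_comparisons)
  fix a
  have "convex_on UNIV (\<lambda>t. \<phi> (\<beta> * t + (\<alpha> * qs_hatY j a + c)))"
    by (intro convex_on_affine_comp assms)
  from qs_convex_stepD[OF assms(1) this]
  show "qs_expectation k (\<lambda>b. \<phi> (\<alpha> * qs_hatY j a + \<beta> * qs_hatY k b + c))
     \<le> qs_expectation (Suc k) (\<lambda>b. \<phi> (\<alpha> * qs_hatY j a + \<beta> * qs_hatY (Suc k) b + c))"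
    by (simp add: algebra_simps)
qed

definition qs_pivot_expectation :: "nat \<Rightarrow> nat \<Rightarrow> (real \<Rightarrow> real) \<Rightarrow> real" where
  "qs_pivot_expectation n u \<phi> =
     qs_expectation (u - 1) (\<lambda>a. qs_expectation (n - u) (\<lambda>b. \<phi> (qs_hatY n (a + b + n - 1))))"

lemma qs_expectation_hatY_rec:
  "n > 0 \<Longrightarrow> qs_expectation n (\<lambda>x. \<phi> (qs_hatY n x)) = (\<Sum>u=1..n. qs_pivot_expectation n u \<phi>) / real n"
  unfolding qs_pivot_expectation_def by (rule qs_expectation_rec)

lemma qs_pivot_expectation_split:
  assumes "1 \<le> u" "u \<le> n"
  shows "qs_pivot_expectation n u \<phi> = qs_expectation (u - 1) (\<lambda>a. qs_expectation (n - u) (\<lambda>b.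
           \<phi> (real u / (real n + 1) * qs_hatY (u - 1) a
              + (real n + 1 - real u) / (real n + 1) * qs_hatY (n - u) b + qs_toll n u)))"
  unfolding qs_pivot_expectation_def using qs_hatY_split[OF assms] by simp

text \<open>Given pivot rank \<open>u\<close>, the normalized cost of \<open>n\<close> keys is the mixture, with weights
  \<open>u / (n + 1)\<close> and \<open>(n + 1 - u) / (n + 1)\<close>, of the splits of \<open>n + 1\<close> keys at ranks \<open>u + 1\<close> and
  \<open>u\<close>, in which the subproblem that would be one key larger is kept at its size.\<close>
lemma qs_hatY_pivot_mixture:
  assumes u: "1 \<le> u" "u \<le> n"
  shows "qs_hatY n (a + b + n - 1) =
      real u / (real n + 1) * (real (Suc u) / (real (Suc n) + 1) * qs_hatY (u - 1) a
        + (real (Suc n) + 1 - real (Suc u)) / (real (Suc n) + 1) * qs_hatY (n - u) b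
        + qs_toll (Suc n) (Suc u))
    + (real n + 1 - real u) / (real n + 1) * (real u / (real (Suc n) + 1) * qs_hatY (u - 1) a
        + (real (Suc n) + 1 - real u) / (real (Suc n) + 1) * qs_hatY (n - u) b
        + qs_toll (Suc n) u)"
proof -
  define p where "p = real u / (real n + 1)"
  define a1 where "a1 = real (Suc u) / (real (Suc n) + 1)"
  define b1 where "b1 = (real (Suc n) + 1 - real (Suc u)) / (real (Suc n) + 1)"
  define c1 where "c1 = qs_toll (Suc n) (Suc u)"
  define a2 where "a2 = real u / (real (Suc n) + 1)"
  define b2 where "b2 = (real (Suc n) + 1 - real u) / (real (Suc n) + 1)"
  define c2 where "c2 = qs_toll (Suc n) u"
  have q: "(real n + 1 - real u) / (real n + 1) = 1 - p"
    unfolding p_def by (simp add: field_simps)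
  have "p * a1 + (1 - p) * a2 = real u / (real n + 1)"
    "p * b1 + (1 - p) * b2 = (real n + 1 - real u) / (real n + 1)"
    unfolding q[symmetric] unfolding p_def a1_def a2_def b1_def b2_def
    by (simp_all add: divide_simps) (simp_all add: algebra_simps)
  moreover have "p * c1 + (1 - p) * c2 = qs_toll n u"
    using qs_toll_Suc_combination[OF u] unfolding q[symmetric] unfolding p_def c1_def c2_def
    by (simp add: add_divide_distrib[symmetric])
  moreover have "p * (a1 * x + b1 * y + c1) + (1 - p) * (a2 * x + b2 * y + c2)
      = (p * a1 + (1 - p) * a2) * x + (p * b1 + (1 - p) * b2) * y + (p * c1 + (1 - p) * c2)" for x y
    by (simp add: algebra_simps)
  ultimately show ?thesis
    unfolding qs_hatY_split[OF u] q p_def[symmetric] a1_def[symmetric] b1_def[symmetric]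
      c1_def[symmetric] a2_def[symmetric] b2_def[symmetric] c2_def[symmetric]
    by simp
qed

text \<open>In a split of \<open>n + 1\<close> keys, giving one subproblem a key less can only decrease the
  expectation of a convex function, by the convex order at the smaller size.\<close>
lemma qs_pivot_expectation_Suc_Suc_ge:
  assumes "qs_convex_step (u - 1)" "convex_on UNIV \<phi>" "1 \<le> u" "u \<le> n"
  shows "qs_expectation (u - 1) (\<lambda>a. qs_expectation (n - u) (\<lambda>b. \<phi> (
      real (Suc u) / (real (Suc n) + 1) * qs_hatY (u - 1) a
    + (real (Suc n) + 1 - real (Suc u)) / (real (Suc n) + 1) * qs_hatY (n - u) b
    + qs_toll (Suc n) (Suc u)))) \<le> qs_pivot_expectation (Suc n) (Suc u) \<phi>"
proof -
  have "qs_expectation (u - 1) (\<lambda>a. qs_expectation (n - u) (\<lambda>b. \<phi> (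
      real (Suc u) / (real (Suc n) + 1) * qs_hatY (u - 1) a
    + (real (Suc n) + 1 - real (Suc u)) / (real (Suc n) + 1) * qs_hatY (n - u) b
    + qs_toll (Suc n) (Suc u))))
      \<le> qs_expectation (Suc (u - 1)) (\<lambda>a. qs_expectation (n - u) (\<lambda>b. \<phi> (
          real (Suc u) / (real (Suc n) + 1) * qs_hatY (Suc (u - 1)) a
        + (real (Suc n) + 1 - real (Suc u)) / (real (Suc n) + 1) * qs_hatY (n - u) b
        + qs_toll (Suc n) (Suc u))))"
    using assms(1,2) by (rule qs_convex_step_left)
  also have "\<dots> = qs_pivot_expectation (Suc n) (Suc u) \<phi>"
    using assms(3,4) qs_pivot_expectation_split[of "Suc u" "Suc n" \<phi>] by simp
  finally show ?thesis .
qed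

lemma qs_pivot_expectation_Suc_ge:
  assumes "qs_convex_step (n - u)" "convex_on UNIV \<phi>" "1 \<le> u" "u \<le> n"
  shows "qs_expectation (u - 1) (\<lambda>a. qs_expectation (n - u) (\<lambda>b. \<phi> (
      real u / (real (Suc n) + 1) * qs_hatY (u - 1) a
    + (real (Suc n) + 1 - real u) / (real (Suc n) + 1) * qs_hatY (n - u) b
    + qs_toll (Suc n) u))) \<le> qs_pivot_expectation (Suc n) u \<phi>"
proof -
  have "qs_expectation (u - 1) (\<lambda>a. qs_expectation (n - u) (\<lambda>b. \<phi> (
      real u / (real (Suc n) + 1) * qs_hatY (u - 1) a
    + (real (Suc n) + 1 - real u) / (real (Suc n) + 1) * qs_hatY (n - u) b
    + qs_toll (Suc n) u)))
      \<le> qs_expectation (u - 1) (\<lambda>a. qs_expectation (Suc (n - u)) (\<lambda>b. \<phi> (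
          real u / (real (Suc n) + 1) * qs_hatY (u - 1) a
        + (real (Suc n) + 1 - real u) / (real (Suc n) + 1) * qs_hatY (Suc (n - u)) b
        + qs_toll (Suc n) u)))"
    using assms(1,2) by (rule qs_convex_step_right)
  also have "\<dots> = qs_pivot_expectation (Suc n) u \<phi>"
    using assms(3,4) qs_pivot_expectation_split[of u "Suc n" \<phi>] by (simp add: Suc_diff_le)
  finally show ?thesis .
qed

lemma qs_pivot_expectation_convex_le:
  assumes step: "qs_convex_step (u - 1)" "qs_convex_step (n - u)" and \<phi>: "convex_on UNIV \<phi>"
    and u: "1 \<le> u" "u \<le> n"
  shows "(real n + 1) * qs_pivot_expectation n u \<phi>
    \<le> real u * qs_pivot_expectation (Suc n) (Suc u) \<phi> + (real n + 1 - real u) * qs_pivot_expectation (Suc n) u \<phi>"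
proof -
  define p where "p = real u / (real n + 1)"
  define Z1 where "Z1 a b = real (Suc u) / (real (Suc n) + 1) * qs_hatY (u - 1) a
    + (real (Suc n) + 1 - real (Suc u)) / (real (Suc n) + 1) * qs_hatY (n - u) b
    + qs_toll (Suc n) (Suc u)" for a b
  define Z2 where "Z2 a b = real u / (real (Suc n) + 1) * qs_hatY (u - 1) a
    + (real (Suc n) + 1 - real u) / (real (Suc n) + 1) * qs_hatY (n - u) b + qs_toll (Suc n) u" for a b
  have p: "0 \<le> p" "p \<le> 1" "(real n + 1 - real u) / (real n + 1) = 1 - p"
    using u unfolding p_def by (auto simp: field_simps)
  have np: "(real n + 1) * p = real u" "(real n + 1) * (1 - p) = real n + 1 - real u"
    unfolding p(3)[symmetric] unfolding p_def by simp_all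
  have Z1_le: "qs_expectation (u - 1) (\<lambda>a. qs_expectation (n - u) (\<lambda>b. \<phi> (Z1 a b)))
      \<le> qs_pivot_expectation (Suc n) (Suc u) \<phi>"
    unfolding Z1_def using step(1) \<phi> u by (rule qs_pivot_expectation_Suc_Suc_ge)
  have Z2_le: "qs_expectation (u - 1) (\<lambda>a. qs_expectation (n - u) (\<lambda>b. \<phi> (Z2 a b)))
      \<le> qs_pivot_expectation (Suc n) u \<phi>"
    unfolding Z2_def using step(2) \<phi> u by (rule qs_pivot_expectation_Suc_ge)
  have jensen: "\<phi> (p * x + (1 - p) * y) \<le> p * \<phi> x + (1 - p) * \<phi> y" for x y
    using convex_onD[OF \<phi>, of p y x] p(1,2) by (simp add: add.commute)
  have "qs_pivot_expectation n u \<phi>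
      \<le> qs_expectation (u - 1) (\<lambda>a. qs_expectation (n - u) (\<lambda>b. p * \<phi> (Z1 a b) + (1 - p) * \<phi> (Z2 a b)))"
    unfolding qs_pivot_expectation_def qs_hatY_pivot_mixture[OF u] p(3) p_def[symmetric]
      Z1_def[symmetric] Z2_def[symmetric]
    by (intro integral_mono integrable_qs_comparisons jensen)
  also have "\<dots> \<le> p * qs_pivot_expectation (Suc n) (Suc u) \<phi> + (1 - p) * qs_pivot_expectation (Suc n) u \<phi>"
    using p(1,2) Z1_le Z2_le by (simp add: add_mono mult_left_mono)
  finally have "(real n + 1) * qs_pivot_expectation n u \<phi> \<le> (real n + 1) *
      (p * qs_pivot_expectation (Suc n) (Suc u) \<phi> + (1 - p) * qs_pivot_expectation (Suc n) u \<phi>)"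
    by simp
  also have "\<dots> = real u * qs_pivot_expectation (Suc n) (Suc u) \<phi>
      + (real n + 1 - real u) * qs_pivot_expectation (Suc n) u \<phi>"
    using np by (simp only: distrib_left mult.assoc[symmetric])
  finally show ?thesis .
qed

lemma sum_weighted_shift:
  fixes G :: "nat \<Rightarrow> real"
  shows "(\<Sum>u=1..n. real u * G (Suc u)) + (\<Sum>u=1..n. (real n + 1 - real u) * G u)
     = real n * (\<Sum>u=1..Suc n. G u)"
proof (induction n)
  case (Suc n)
  have "(\<Sum>u=1..Suc n. (real (Suc n) + 1 - real u) * G u)
      = (\<Sum>u=1..Suc n. (real n + 1 - real u) * G u + G u)"
    by (simp add: algebra_simps)
  also have "\<dots> = (\<Sum>u=1..n. (real n + 1 - real u) * G u) + (\<Sum>u=1..Suc n. G u)"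
    by (simp add: sum.distrib)
  with Suc show ?case
    by (simp add: algebra_simps)
qed simp

theorem qs_convex_step_holds: "qs_convex_step n"
proof (induction n rule: less_induct)
  case (less n)
  show ?case
  proof (cases "n = 0")
    case True
    then show ?thesis
      by (simp add: qs_convex_step_def qs_hatY_def qs_mean_def harm_expand)
  next
    case False
    show ?thesis
      unfolding qs_convex_step_def
    proof (intro allI impI)
      fix \<phi> :: "real \<Rightarrow> real"
      assume \<phi>: "convex_on UNIV \<phi>"
      define P where "P = (\<Sum>u=1..n. qs_pivot_expectation n u \<phi>)"
      define Q where "Q u = qs_pivot_expectation (Suc n) u \<phi>" for u
      have "(real n + 1) * P \<le> (\<Sum>u=1..n. real u * Q (Suc u) + (real n + 1 - real u) * Q u)"
        unfolding P_def sum_distrib_left Q_def using False less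
        by (intro sum_mono qs_pivot_expectation_convex_le \<phi>) auto
      also have "\<dots> = real n * sum Q {1..Suc n}"
        by (simp only: sum.distrib sum_weighted_shift)
      finally have "(real n + 1) * P \<le> real n * sum Q {1..Suc n}" .
      moreover have "P = real n * qs_expectation n (\<lambda>x. \<phi> (qs_hatY n x))"
        "sum Q {1..Suc n} = (real n + 1) * qs_expectation (Suc n) (\<lambda>x. \<phi> (qs_hatY (Suc n) x))"
        using False unfolding P_def Q_def by (simp_all add: qs_expectation_hatY_rec add.commute del: sum.cl_ivl_Suc)
      ultimately have "(real n * (real n + 1)) * qs_expectation n (\<lambda>x. \<phi> (qs_hatY n x))
          \<le> (real n * (real n + 1)) * qs_expectation (Suc n) (\<lambda>x. \<phi> (qs_hatY (Suc n) x))"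
        by (simp only: ac_simps)
      then show "qs_expectation n (\<lambda>x. \<phi> (qs_hatY n x))
          \<le> qs_expectation (Suc n) (\<lambda>x. \<phi> (qs_hatY (Suc n) x))"
        using False by simp
    qed
  qed
qed

corollary qs_expectation_convex_le_Suc:
  "convex_on UNIV \<phi> \<Longrightarrow>
     qs_expectation n (\<lambda>x. \<phi> (qs_hatY n x)) \<le> qs_expectation (Suc n) (\<lambda>x. \<phi> (qs_hatY (Suc n) x))"
  by (rule qs_convex_stepD[OF qs_convex_step_holds])

section \<open>Moment generating functions\<close>

definition qs_mgf :: "nat \<Rightarrow> real \<Rightarrow> real" where
  "qs_mgf n l = qs_expectation n (\<lambda>x. exp (l * qs_hatY n x))"

lemma qs_mgf_0 [simp]: "qs_mgf 0 l = 1"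
  by (simp add: qs_mgf_def qs_hatY_def)

lemma incseq_qs_mgf: "incseq (\<lambda>n. qs_mgf n l)"
proof (rule incseq_SucI)
  have "convex_on UNIV (\<lambda>t. exp (l * t + 0))"
    by (intro convex_on_affine_comp exp_convex)
  then show "qs_mgf n l \<le> qs_mgf (Suc n) l" for n
    unfolding qs_mgf_def using qs_expectation_convex_le_Suc by simp
qed

text \<open>Affine functions are both convex and concave, so the convex order fixes their expectations.\<close>
lemma qs_expectation_hatY: "qs_expectation n (qs_hatY n) = 0"
proof (induction n)
  case (Suc n)
  have "convex_on UNIV (\<lambda>t. c * t + 0)" for c :: real
    by (intro convex_on_affine_comp) (simp add: convex_on_ident)
  from qs_expectation_convex_le_Suc[OF this[of 1]] qs_expectation_convex_le_Suc[OF this[of "-1"]]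
  have "qs_expectation n (qs_hatY n) \<le> qs_expectation (Suc n) (qs_hatY (Suc n))"
    "qs_expectation (Suc n) (qs_hatY (Suc n)) \<le> qs_expectation n (qs_hatY n)"
    by simp_all
  with Suc show ?case
    by linarith
qed (simp add: qs_hatY_def)

lemma qs_mgf_ge_1: "1 \<le> qs_mgf n l"
proof -
  have "qs_expectation n (\<lambda>x. 1 + l * qs_hatY n x) \<le> qs_mgf n l"
    unfolding qs_mgf_def by (intro integral_mono integrable_qs_comparisons exp_ge_add_one_self)
  then show ?thesis
    by (simp add: qs_expectation_hatY)
qed

lemma qs_mgf_pos: "0 < qs_mgf n l"
  using qs_mgf_ge_1[of n l] by simp

lemma qs_pivot_expectation_exp:
  assumes "1 \<le> u" "u \<le> n"
  shows "qs_pivot_expectation n u (\<lambda>t. exp (l * t)) =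
    qs_mgf (u - 1) (l * (real u / (real n + 1)))
    * qs_mgf (n - u) (l * ((real n + 1 - real u) / (real n + 1))) * exp (l * qs_toll n u)"
  unfolding qs_pivot_expectation_split[OF assms] qs_mgf_def
  by (simp add: distrib_left exp_add ac_simps)

lemma qs_mgf_rec:
  assumes "n > 0"
  shows "qs_mgf n l = (\<Sum>u=1..n. qs_mgf (u - 1) (l * (real u / (real n + 1)))
      * qs_mgf (n - u) (l * ((real n + 1 - real u) / (real n + 1))) * exp (l * qs_toll n u)) / real n"
  using qs_expectation_hatY_rec[OF assms, of "\<lambda>t. exp (l * t)"]
  unfolding qs_mgf_def[of n] by (simp add: qs_pivot_expectation_exp)

text \<open>Young's inequality applied pointwise against the constant \<open>c = E exp X\<close>.\<close>
lemma (in prob_space) expectation_exp_scale_le_powr: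
  fixes X :: "'a \<Rightarrow> real"
  assumes X: "integrable M X" "integrable M (\<lambda>x. exp (X x))" "integrable M (\<lambda>x. exp (\<theta> * X x))"
    and \<theta>: "0 < \<theta>" "\<theta> \<le> 1"
  shows "expectation (\<lambda>x. exp (\<theta> * X x)) \<le> expectation (\<lambda>x. exp (X x)) powr \<theta>"
proof -
  define c where "c = expectation (\<lambda>x. exp (X x))"
  have "exp (expectation X) \<le> c"
    unfolding c_def using X by (intro jensens_inequality[where I = UNIV]) (auto intro: exp_convex)
  then have c: "0 < c"
    using exp_gt_zero order_less_le_trans by blast
  have "exp (\<theta> * X x) \<le> (\<theta> * exp (X x) + (1 - \<theta>) * c) / c powr (1 - \<theta>)" for x
  proof -
    have "exp (X x) powr \<theta> * c powr (1 - \<theta>) \<le> \<theta> * exp (X x) + (1 - \<theta>) * c"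
      using \<theta> c by (intro Youngs_inequality_0) auto
    then show ?thesis
      using c by (simp add: exp_powr_real field_simps)
  qed
  then have "expectation (\<lambda>x. exp (\<theta> * X x))
      \<le> expectation (\<lambda>x. (\<theta> * exp (X x) + (1 - \<theta>) * c) / c powr (1 - \<theta>))"
    using X by (intro integral_mono) auto
  also have "\<dots> = c powr \<theta>"
    using X c by (simp add: c_def prob_space powr_diff field_simps)
  finally show ?thesis
    unfolding c_def .
qed

lemma qs_mgf_scale_le_powr:
  "0 < \<theta> \<Longrightarrow> \<theta> \<le> 1 \<Longrightarrow> qs_mgf n (\<theta> * l) \<le> qs_mgf n l powr \<theta>"
  unfolding qs_mgf_def
  using measure_pmf.expectation_exp_scale_le_powr[of "qs_comparisons n" "\<lambda>x. l * qs_hatY n x" \<theta>]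
  by (simp add: mult.assoc)

section \<open>Uniform bounds on the moment generating functions\<close>

lemma exp_le_quadratic:
  fixes x :: real
  assumes "x \<le> 1"
  shows "exp x \<le> 1 + x + x\<^sup>2"
proof (cases "0 \<le> x")
  case True
  then show ?thesis
    using exp_bound assms by blast
next
  case False
  have "1 - x \<le> exp (- x)"
    using exp_ge_add_one_self[of "- x"] by simp
  then have "exp x * (1 - x) \<le> 1"
    using False by (simp add: exp_minus field_simps)
  moreover have "1 \<le> (1 + x + x\<^sup>2) * (1 - x)"
    using False by (simp add: algebra_simps power2_eq_square mult_nonpos_nonneg)
  ultimately have "exp x * (1 - x) \<le> (1 + x + x\<^sup>2) * (1 - x)"
    by linarith
  then show ?thesis
    using False by (simp add: mult_le_cancel_right)
qed

text \<open>One step of the induction for small \<open>\<bar>l\<bar>\<close>: the pivot splits \<open>l\<^sup>2\<close> into \<open>(l a)\<^sup>2 + (l b)\<^sup>2 = l\<^sup>2 - 2 l\<^sup>2 a b\<close>,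
  and the saving \<open>l\<^sup>2 a b\<close> pays for the quadratic term of the toll.\<close>
lemma exp_pivot_split_le:
  fixes a b l C :: real
  assumes ab: "0 \<le> a" "0 \<le> b" "a + b = 1" and C: "\<bar>C\<bar> \<le> 2" and l: "\<bar>l\<bar> \<le> 1/16"
  shows "exp (64 * (l * a)\<^sup>2) * exp (64 * (l * b)\<^sup>2) * exp (l * C)
      \<le> exp (64 * l\<^sup>2) * (1 + l * C + 8 * l\<^sup>2 - 96 * l\<^sup>2 * (a * b))"
proof -
  define q where "q = 128 * l\<^sup>2 * (a * b)"
  define x where "x = l * C - q"
  have b: "b = 1 - a"
    using ab by simp
  have "64 * (l * a)\<^sup>2 + 64 * (l * b)\<^sup>2 + l * C = 64 * l\<^sup>2 + x"
    unfolding x_def q_def b by (simp add: power2_eq_square algebra_simps)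
  then have lhs: "exp (64 * (l * a)\<^sup>2) * exp (64 * (l * b)\<^sup>2) * exp (l * C) = exp (64 * l\<^sup>2) * exp x"
    by (simp flip: exp_add)
  have "a * b = 1/4 - (a - 1/2)\<^sup>2"
    unfolding b by (simp add: power2_eq_square algebra_simps)
  then have "a * b \<le> 1/4"
    by simp
  moreover have "l\<^sup>2 \<le> (1/16)\<^sup>2"
    using l by (metis abs_le_square_iff abs_of_nonneg zero_le_divide_1_iff zero_le_numeral)
  ultimately have "l\<^sup>2 * (a * b) \<le> (1/16)\<^sup>2 * (1/4)"
    using ab by (intro mult_mono) auto
  then have q: "0 \<le> q" "q \<le> 1/8"
    using ab unfolding q_def by (auto simp: power2_eq_square)
  have lC: "\<bar>l * C\<bar> \<le> 1/16 * 2"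
    unfolding abs_mult using l C by (intro mult_mono) auto
  have "C\<^sup>2 \<le> 2\<^sup>2"
    using C by (metis abs_le_square_iff abs_numeral)
  have lC2: "(l * C)\<^sup>2 \<le> 4 * l\<^sup>2"
    using mult_left_mono[OF \<open>C\<^sup>2 \<le> 2\<^sup>2\<close>, of "l\<^sup>2"] by (simp add: power_mult_distrib mult.commute)
  have "x\<^sup>2 = 2 * (l * C)\<^sup>2 + 2 * q\<^sup>2 - (l * C + q)\<^sup>2"
    unfolding x_def by (simp add: power2_eq_square algebra_simps)
  moreover have "q\<^sup>2 \<le> q / 8"
    using mult_left_mono[OF q(2) q(1)] by (simp add: power2_eq_square)
  moreover have "0 \<le> (l * C + q)\<^sup>2"
    by simp
  ultimately have "x\<^sup>2 \<le> 8 * l\<^sup>2 + q / 4"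
    using lC2 by linarith
  moreover have "x \<le> 1"
    using lC q unfolding x_def by (simp add: abs_le_iff)
  ultimately have "exp x \<le> 1 + l * C + 8 * l\<^sup>2 - 96 * l\<^sup>2 * (a * b)"
    using exp_le_quadratic[of x] unfolding x_def q_def by linarith
  then show ?thesis
    unfolding lhs by (intro mult_left_mono) auto
qed

lemma sum_pivot_weights_product_ge:
  "real n / 12 \<le> (\<Sum>u=1..n. real u / (real n + 1) * ((real n + 1 - real u) / (real n + 1)))"
proof -
  have S: "(\<Sum>u=1..n. real u * (real n + 1 - real u)) = real n * (real n + 1) * (real n + 2) / 6"
  proof (induction n)
    case (Suc n)
    have "(\<Sum>u=1..Suc n. real u * (real (Suc n) + 1 - real u))
        = (\<Sum>u=1..n. real u * (real n + 1 - real u)) + (\<Sum>u=1..Suc n. real u)"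
      by (simp add: sum.distrib[symmetric] algebra_simps)
    with Suc double_gauss_sum_from_Suc_0[of "Suc n", where 'a = real] show ?case
      by (simp add: field_simps)
  qed simp
  have "(\<Sum>u=1..n. real u / (real n + 1) * ((real n + 1 - real u) / (real n + 1)))
      = (\<Sum>u=1..n. real u * (real n + 1 - real u)) / ((real n + 1) * (real n + 1))"
    by (simp add: sum_divide_distrib)
  also have "\<dots> = real n * (real n + 1) * (real n + 2) / 6 / ((real n + 1) * (real n + 1))"
    unfolding S ..
  also have "\<dots> = real n * (real n + 2) / (6 * (real n + 1))"
    by simp
  finally show ?thesis
    by (simp only:) (simp add: field_simps)
qed

lemma sum_pivot_quadratic_le:
  assumes "n > 0"
  shows "(\<Sum>u=1..n. 1 + l * qs_toll n u + 8 * l\<^sup>2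
      - 96 * l\<^sup>2 * (real u / (real n + 1) * ((real n + 1 - real u) / (real n + 1)))) \<le> real n"
proof -
  define w where "w u = real u / (real n + 1) * ((real n + 1 - real u) / (real n + 1))" for u
  have "8 * l\<^sup>2 * real n \<le> 96 * l\<^sup>2 * (\<Sum>u=1..n. w u)"
    using mult_left_mono[OF sum_pivot_weights_product_ge[of n], of "96 * l\<^sup>2"] unfolding w_def by simp
  moreover have "(\<Sum>u=1..n. 1 + l * qs_toll n u + 8 * l\<^sup>2 - 96 * l\<^sup>2 * w u)
      = real n + 8 * l\<^sup>2 * real n - 96 * l\<^sup>2 * (\<Sum>u=1..n. w u)"
    using sum_qs_toll[OF assms]
    by (simp add: sum.distrib sum_subtractf sum_distrib_left[symmetric] del: sum.cl_ivl_Suc)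
  ultimately show ?thesis
    unfolding w_def by linarith
qed

lemma qs_mgf_split_le_small:
  assumes ab: "0 \<le> a" "0 \<le> b" "a + b = 1" and C: "\<bar>C\<bar> \<le> 2" and l: "\<bar>l\<bar> \<le> 1/16"
    and j: "\<And>l'. \<bar>l'\<bar> \<le> 1/16 \<Longrightarrow> qs_mgf j l' \<le> exp (64 * l'\<^sup>2)"
    and k: "\<And>l'. \<bar>l'\<bar> \<le> 1/16 \<Longrightarrow> qs_mgf k l' \<le> exp (64 * l'\<^sup>2)"
  shows "qs_mgf j (l * a) * qs_mgf k (l * b) * exp (l * C)
    \<le> exp (64 * l\<^sup>2) * (1 + l * C + 8 * l\<^sup>2 - 96 * l\<^sup>2 * (a * b))"
proof -
  have "\<bar>l * a\<bar> \<le> \<bar>l\<bar>" "\<bar>l * b\<bar> \<le> \<bar>l\<bar>"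
    using ab by (auto simp: abs_mult intro!: mult_left_le)
  then have "qs_mgf j (l * a) * qs_mgf k (l * b) \<le> exp (64 * (l * a)\<^sup>2) * exp (64 * (l * b)\<^sup>2)"
    using l by (intro mult_mono j k) (auto intro: less_imp_le qs_mgf_pos)
  then have "qs_mgf j (l * a) * qs_mgf k (l * b) * exp (l * C)
      \<le> exp (64 * (l * a)\<^sup>2) * exp (64 * (l * b)\<^sup>2) * exp (l * C)"
    by simp
  also have "\<dots> \<le> exp (64 * l\<^sup>2) * (1 + l * C + 8 * l\<^sup>2 - 96 * l\<^sup>2 * (a * b))"
    using ab C l by (rule exp_pivot_split_le)
  finally show ?thesis .
qed

lemma qs_mgf_le_small:
  assumes "\<bar>l\<bar> \<le> 1/16"
  shows "qs_mgf n l \<le> exp (64 * l\<^sup>2)"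
  using assms
proof (induction n arbitrary: l rule: less_induct)
  case (less n)
  show ?case
  proof (cases "n = 0")
    case False
    then have n: "n > 0"
      by simp
    have "qs_mgf n l \<le> (\<Sum>u=1..n. exp (64 * l\<^sup>2) * (1 + l * qs_toll n u + 8 * l\<^sup>2
        - 96 * l\<^sup>2 * (real u / (real n + 1) * ((real n + 1 - real u) / (real n + 1))))) / real n"
      unfolding qs_mgf_rec[OF n] using less abs_qs_toll_le_1
      by (intro divide_right_mono sum_mono qs_mgf_split_le_small) (force simp: divide_simps)+
    also have "\<dots> = exp (64 * l\<^sup>2) * (\<Sum>u=1..n. 1 + l * qs_toll n u + 8 * l\<^sup>2
        - 96 * l\<^sup>2 * (real u / (real n + 1) * ((real n + 1 - real u) / (real n + 1)))) / real n"
      by (simp only: sum_distrib_left)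
    also have "\<dots> \<le> exp (64 * l\<^sup>2) * real n / real n"
      using sum_pivot_quadratic_le[OF n, of l] by (intro divide_right_mono mult_left_mono) auto
    finally show ?thesis
      using n by simp
  qed simp
qed

lemma sum_exp_pivot_weights_le:
  assumes "0 < s"
  shows "(\<Sum>u=1..n. exp (s * (real u / (real n + 1)))) \<le> (real n + 1) * exp s / s"
proof -
  define q where "q = exp (s / (real n + 1))"
  have q1: "s / (real n + 1) \<le> q - 1"
    unfolding q_def using exp_ge_add_one_self[of "s / (real n + 1)"] by linarith
  moreover have "0 < s / (real n + 1)"
    using assms by simp
  ultimately have q0: "0 < q - 1"
    by linarith
  have pow: "exp (s * (real u / (real n + 1))) = q ^ u" for u
    unfolding q_def exp_of_nat_mult[symmetric] by (simp add: field_simps)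
  have "(\<Sum>u=1..n. exp (s * (real u / (real n + 1)))) \<le> (\<Sum>u<Suc n. q ^ u)"
    unfolding pow by (intro sum_mono2) (auto simp: q_def)
  also have "\<dots> = (q ^ Suc n - 1) / (q - 1)"
    using q0 by (intro geometric_sum) auto
  also have "q ^ Suc n = exp s"
    unfolding q_def exp_of_nat_mult[symmetric] by (simp add: field_simps)
  also have "(exp s - 1) / (q - 1) \<le> exp s / (s / (real n + 1))"
    using q0 q1 assms by (intro frac_le) auto
  finally show ?thesis
    by (simp add: ac_simps)
qed

lemma sum_pivot_reflect:
  fixes f :: "real \<Rightarrow> real"
  shows "(\<Sum>u=1..n. f (real n + 1 - real u)) = (\<Sum>u=1..n. f (real u))"
  by (rule sum.reindex_bij_witness[of _ "\<lambda>u. n + 1 - u" "\<lambda>u. n + 1 - u"])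
     (auto simp: of_nat_diff algebra_simps)

text \<open>By H\<ouml>lder, the factor with the larger share \<open>b\<close> of \<open>l\<close> costs at most \<open>exp (s b)\<close>, while the
  other one sees at most half of \<open>l\<close>.\<close>
lemma qs_mgf_pivot_product_le:
  assumes hyp: "\<And>m l'. \<bar>l'\<bar> \<le> r \<Longrightarrow> qs_mgf m l' \<le> B" and l: "\<bar>l\<bar> \<le> 2 * r"
    and ab: "0 \<le> a" "a \<le> 1/2" "0 < b" "b \<le> 1" and bound: "qs_mgf k l \<le> exp s"
  shows "qs_mgf j (l * a) * qs_mgf k (l * b) \<le> B * exp (s * b)"
proof -
  have "\<bar>l * a\<bar> \<le> 2 * r * (1/2)"
    unfolding abs_mult using l ab by (intro mult_mono) auto
  then have "qs_mgf j (l * a) \<le> B"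
    by (intro hyp) simp
  moreover have "qs_mgf k (l * b) \<le> qs_mgf k l powr b"
    using qs_mgf_scale_le_powr[of b k l] ab by (simp add: mult.commute)
  moreover have "qs_mgf k l powr b \<le> exp s powr b"
    using bound ab qs_mgf_pos[of k l] by (intro powr_mono2) auto
  ultimately show ?thesis
    using qs_mgf_pos[of j "l * a"] qs_mgf_pos[of k "l * b"]
    by (intro mult_mono) (auto simp: exp_powr_real)
qed

lemma qs_mgf_split_le:
  assumes B: "1 \<le> B" and hyp: "\<And>m l'. \<bar>l'\<bar> \<le> r \<Longrightarrow> qs_mgf m l' \<le> B" and l: "\<bar>l\<bar> \<le> 2 * r"
    and ab: "0 < a" "0 < b" "a + b = 1" and C: "\<bar>C\<bar> \<le> 1"
    and j: "qs_mgf j l \<le> exp s" and k: "qs_mgf k l \<le> exp s"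
  shows "qs_mgf j (l * a) * qs_mgf k (l * b) * exp (l * C) \<le> B * exp (2 * r) * (exp (s * a) + exp (s * b))"
proof -
  have "l * C \<le> \<bar>l\<bar> * \<bar>C\<bar>"
    by (metis abs_ge_self abs_mult)
  also have "\<dots> \<le> 2 * r * 1"
    using C l by (intro mult_mono) auto
  finally have toll: "exp (l * C) \<le> exp (2 * r)"
    by simp
  have "qs_mgf j (l * a) * qs_mgf k (l * b) \<le> B * (exp (s * a) + exp (s * b))"
  proof (cases "a \<le> 1/2")
    case True
    then have "qs_mgf j (l * a) * qs_mgf k (l * b) \<le> B * exp (s * b)"
      using ab k by (intro qs_mgf_pivot_product_le[OF hyp l]) auto
    moreover have "B * exp (s * b) \<le> B * (exp (s * a) + exp (s * b))"
      using B by (intro mult_left_mono) auto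
    ultimately show ?thesis
      by linarith
  next
    case False
    then have "qs_mgf k (l * b) * qs_mgf j (l * a) \<le> B * exp (s * a)"
      using ab j by (intro qs_mgf_pivot_product_le[OF hyp l]) auto
    moreover have "B * exp (s * a) \<le> B * (exp (s * a) + exp (s * b))"
      using B by (intro mult_left_mono) auto
    ultimately show ?thesis
      by (simp add: mult.commute)
  qed
  from mult_mono[OF this toll] B show ?thesis
    by (simp add: mult_ac)
qed

lemma qs_mgf_double:
  assumes B: "1 \<le> B" and hyp: "\<And>m l'. \<bar>l'\<bar> \<le> r \<Longrightarrow> qs_mgf m l' \<le> B" and l: "\<bar>l\<bar> \<le> 2 * r"
  shows "qs_mgf n l \<le> exp (4 * B * exp (2 * r))"
proof (induction n rule: less_induct)
  case (less n)
  define s where "s = 4 * B * exp (2 * r)"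
  have s: "0 < s"
    unfolding s_def using B by simp
  show ?case
  proof (cases "n = 0")
    case False
    then have n: "n > 0"
      by simp
    define a where "a u = real u / (real n + 1)" for u
    define b where "b u = (real n + 1 - real u) / (real n + 1)" for u
    have "qs_mgf n l \<le> (\<Sum>u=1..n. B * exp (2 * r) * (exp (s * a u) + exp (s * b u))) / real n"
      unfolding qs_mgf_rec[OF n] a_def b_def s_def using less abs_qs_toll_le_1
      by (intro divide_right_mono sum_mono qs_mgf_split_le[OF B hyp l]) (force simp: divide_simps)+
    also have "(\<Sum>u=1..n. B * exp (2 * r) * (exp (s * a u) + exp (s * b u)))
        = B * exp (2 * r) * (2 * (\<Sum>u=1..n. exp (s * (real u / (real n + 1)))))"
      using sum_pivot_reflect[of "\<lambda>t. exp (s * (t / (real n + 1)))" n]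
      by (simp add: a_def b_def sum.distrib sum_distrib_left[symmetric])
    also have "B * exp (2 * r) * (2 * (\<Sum>u=1..n. exp (s * (real u / (real n + 1))))) / real n
        \<le> B * exp (2 * r) * (2 * ((real n + 1) * exp s / s)) / real n"
      using sum_exp_pivot_weights_le[OF s] B by (intro divide_right_mono mult_left_mono) auto
    also have "\<dots> = exp s * ((real n + 1) / (2 * real n))"
      using B n unfolding s_def by (simp add: field_simps)
    also have "\<dots> \<le> exp s"
      using n by (intro mult_left_le) auto
    finally show ?thesis
      unfolding s_def .
  qed (use B in simp)
qed

lemma qs_mgf_bounded_scale:
  "\<exists>B \<ge> 1. \<forall>n l. \<bar>l\<bar> \<le> 2 ^ j / 16 \<longrightarrow> qs_mgf n l \<le> B"
proof (induction j)
  case 0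
  have "qs_mgf n l \<le> exp (1/4)" if "\<bar>l\<bar> \<le> 1/16" for n l
  proof -
    have "l\<^sup>2 \<le> (1/16)\<^sup>2"
      using that by (metis abs_le_square_iff abs_of_nonneg zero_le_divide_1_iff zero_le_numeral)
    then have "exp (64 * l\<^sup>2) \<le> exp (1/4)"
      by (simp add: power2_eq_square)
    with qs_mgf_le_small[OF that, of n] show ?thesis
      by linarith
  qed
  then show ?case
    by (intro exI[of _ "exp (1/4)"]) auto
next
  case (Suc j)
  then obtain B where B: "1 \<le> B" "\<And>n l. \<bar>l\<bar> \<le> 2 ^ j / 16 \<Longrightarrow> qs_mgf n l \<le> B"
    by auto
  then have "qs_mgf n l \<le> exp (4 * B * exp (2 * (2 ^ j / 16)))" if "\<bar>l\<bar> \<le> 2 ^ Suc j / 16" for n l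
    using that by (intro qs_mgf_double[of B "2 ^ j / 16"]) auto
  moreover have "1 \<le> exp (4 * B * exp (2 * (2 ^ j / 16 :: real)))"
    using B by simp
  ultimately show ?case
    by blast
qed

lemma qs_mgf_bounded: "\<exists>B. \<forall>n. qs_mgf n l \<le> B"
proof -
  obtain j where "16 * \<bar>l\<bar> < 2 ^ j"
    using real_arch_pow[of 2 "16 * \<bar>l\<bar>"] by auto
  moreover obtain B where "\<And>n l. \<bar>l\<bar> \<le> 2 ^ j / 16 \<Longrightarrow> qs_mgf n l \<le> B"
    using qs_mgf_bounded_scale[of j] by auto
  ultimately show ?thesis
    by (intro exI[of _ B]) simp
qed

section \<open>The law of \<open>(X\<^sub>n - \<mu>\<^sub>n) / n\<close>\<close>

lemma abs_exp_diff_le: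
  fixes x y :: real
  shows "\<bar>exp x - exp y\<bar> \<le> \<bar>x - y\<bar> * exp (max x y)"
proof -
  have *: "exp x - exp y \<le> (x - y) * exp x" if "y \<le> x" for x y :: real
  proof -
    have "1 - (x - y) \<le> exp (y - x)"
      using exp_ge_add_one_self[of "y - x"] by linarith
    then have "(1 - (x - y)) * exp x \<le> exp (y - x) * exp x"
      by (intro mult_right_mono) auto
    then show ?thesis
      by (simp add: exp_diff algebra_simps)
  qed
  show ?thesis
    using *[of y x] *[of x y] by (cases "y \<le> x") (auto simp: max_def)
qed

lemma abs_exp_scale_diff_le:
  fixes t \<delta> :: real
  assumes "0 \<le> \<delta>" "\<delta> \<le> 1"
  shows "\<bar>exp ((1 + \<delta>) * t) - exp t\<bar> \<le> \<delta> * (exp (3 * t) + exp (- 3 * t))"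
proof -
  have "\<bar>exp ((1 + \<delta>) * t) - exp t\<bar> \<le> \<delta> * \<bar>t\<bar> * exp (2 * \<bar>t\<bar>)"
  proof -
    have "(1 + \<delta>) * t \<le> 2 * \<bar>t\<bar>"
    proof (cases "0 \<le> t")
      case True
      then show ?thesis
        using assms by (simp add: mult_right_mono)
    next
      case False
      then have "(1 + \<delta>) * t \<le> 0"
        using assms by (simp add: mult_nonneg_nonpos)
      with False show ?thesis
        by simp
    qed
    then have "exp (max ((1 + \<delta>) * t) t) \<le> exp (2 * \<bar>t\<bar>)"
      by simp
    have "\<bar>exp ((1 + \<delta>) * t) - exp t\<bar> \<le> \<bar>(1 + \<delta>) * t - t\<bar> * exp (max ((1 + \<delta>) * t) t)"
      by (rule abs_exp_diff_le)
    also have "\<bar>(1 + \<delta>) * t - t\<bar> = \<delta> * \<bar>t\<bar>"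
      using assms by (simp add: algebra_simps abs_mult)
    also have "\<delta> * \<bar>t\<bar> * exp (max ((1 + \<delta>) * t) t) \<le> \<delta> * \<bar>t\<bar> * exp (2 * \<bar>t\<bar>)"
      using \<open>exp (max ((1 + \<delta>) * t) t) \<le> exp (2 * \<bar>t\<bar>)\<close> assms by (intro mult_left_mono) auto
    finally show ?thesis .
  qed
  also have "\<dots> \<le> \<delta> * exp \<bar>t\<bar> * exp (2 * \<bar>t\<bar>)"
    using assms exp_gt_self[of "\<bar>t\<bar>"] by (intro mult_left_mono mult_right_mono) auto
  also have "\<dots> = \<delta> * exp (3 * \<bar>t\<bar>)"
    by (simp add: mult.assoc flip: exp_add)
  also have "exp (3 * \<bar>t\<bar>) \<le> exp (3 * t) + exp (- 3 * t)"
    by (cases "0 \<le> t") auto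
  finally show ?thesis
    using assms by (simp add: mult_left_mono)
qed

lemma qs_mgf_scale_diff_le:
  assumes "0 \<le> \<delta>" "\<delta> \<le> 1"
  shows "\<bar>qs_mgf n ((1 + \<delta>) * l) - qs_mgf n l\<bar> \<le> \<delta> * (qs_mgf n (3 * l) + qs_mgf n (- 3 * l))"
proof -
  have "\<bar>qs_mgf n ((1 + \<delta>) * l) - qs_mgf n l\<bar>
      = \<bar>qs_expectation n (\<lambda>x. exp ((1 + \<delta>) * (l * qs_hatY n x)) - exp (l * qs_hatY n x))\<bar>"
    by (simp add: qs_mgf_def mult.assoc)
  also have "\<dots> \<le> qs_expectation n (\<lambda>x. \<bar>exp ((1 + \<delta>) * (l * qs_hatY n x)) - exp (l * qs_hatY n x)\<bar>)"
    using integral_norm_bound[of "measure_pmf (qs_comparisons n)"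
        "\<lambda>x. exp ((1 + \<delta>) * (l * qs_hatY n x)) - exp (l * qs_hatY n x)"]
    unfolding real_norm_def .
  also have "\<dots> \<le> qs_expectation n (\<lambda>x. \<delta> * (exp (3 * (l * qs_hatY n x)) + exp (- 3 * (l * qs_hatY n x))))"
    using assms by (intro integral_mono abs_exp_scale_diff_le integrable_qs_comparisons)
  also have "\<dots> = \<delta> * (qs_mgf n (3 * l) + qs_mgf n (- 3 * l))"
    by (simp add: qs_mgf_def mult.assoc)
  finally show ?thesis .
qed

lemma qs_mgf_rescale_le:
  assumes "\<And>n. qs_mgf n (3 * l) \<le> B" "\<And>n. qs_mgf n (- 3 * l) \<le> B'"
  shows "\<bar>qs_mgf n ((1 + 1 / real n) * l) - qs_mgf n l\<bar> \<le> (B + B') / real n"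
proof -
  have "1 / real n \<le> 1"
    by (cases n) auto
  then have "\<bar>qs_mgf n ((1 + 1 / real n) * l) - qs_mgf n l\<bar> \<le> 1 / real n * (qs_mgf n (3 * l) + qs_mgf n (- 3 * l))"
    by (intro qs_mgf_scale_diff_le) auto
  also have "\<dots> \<le> 1 / real n * (B + B')"
    using assms by (intro mult_left_mono add_mono) auto
  finally show ?thesis
    by simp
qed

lemma qs_mgf_rescale_tendsto: "(\<lambda>n. qs_mgf n ((1 + 1 / real n) * l) - qs_mgf n l) \<longlonglongrightarrow> 0"
proof -
  obtain B B' where "\<And>n. qs_mgf n (3 * l) \<le> B" "\<And>n. qs_mgf n (- 3 * l) \<le> B'"
    using qs_mgf_bounded by metis
  from qs_mgf_rescale_le[OF this] show ?thesis
    by (intro Lim_null_comparison[OF _ lim_const_over_n[of "B + B'"]]) simp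
qed

lemma qs_mgf_rescale_bounded: "\<exists>B. \<forall>n. qs_mgf n ((1 + 1 / real n) * l) \<le> B"
proof -
  obtain B B3 B3' where B: "\<And>n. qs_mgf n l \<le> B"
    and B3: "\<And>n. qs_mgf n (3 * l) \<le> B3" "\<And>n. qs_mgf n (- 3 * l) \<le> B3'"
    using qs_mgf_bounded by metis
  have "0 \<le> B3 + B3'"
    using B3[of 0] by simp
  have "qs_mgf n ((1 + 1 / real n) * l) \<le> B + (B3 + B3')" for n
  proof -
    have "(B3 + B3') / real n \<le> B3 + B3'"
      using \<open>0 \<le> B3 + B3'\<close> by (cases "n = 0") (auto intro: divide_left_mono[of 1 "real n", simplified])
    moreover have "qs_mgf n ((1 + 1 / real n) * l) - qs_mgf n l \<le> (B3 + B3') / real n"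
      using qs_mgf_rescale_le[OF B3, of n] by (simp add: abs_le_iff)
    ultimately show ?thesis
      using B[of n] by linarith
  qed
  then show ?thesis
    by blast
qed

lemma real_distribution_qs_normalized_law: "real_distribution (qs_normalized_law n)"
  unfolding qs_normalized_law_def
  by (rule prob_space.real_distribution_distr) (auto simp: prob_space_measure_pmf)

lemma integrable_qs_normalized_law:
  "f \<in> borel_measurable borel \<Longrightarrow> integrable (qs_normalized_law n) (f :: real \<Rightarrow> real)"
  unfolding qs_normalized_law_def by (simp add: integrable_distr_eq)

text \<open>For \<open>n = 0\<close> both sides equal 1 because of the division by zero in \<open>qs_normalized_law 0\<close>.\<close>
lemma integral_exp_qs_normalized_law:
  "(\<integral>y. exp (c * y) \<partial>qs_normalized_law n) = qs_mgf n ((1 + 1 / real n) * c)"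
proof (cases "n = 0")
  case False
  have "1 + 1 / real n = (real n + 1) / real n"
    using False by (simp add: field_simps)
  then have "c * ((real x - qs_mean n) / real n) = (1 + 1 / real n) * c * qs_hatY n x" for x
    unfolding qs_hatY_def by simp
  then show ?thesis
    unfolding qs_normalized_law_def qs_mgf_def by (simp add: integral_distr)
qed (simp add: qs_normalized_law_def integral_distr integral_return)

section \<open>Exponential moments under weak convergence\<close>

lemma tendsto_of_uniform_approximation:
  fixes a :: "nat \<Rightarrow> real" and b :: "nat \<Rightarrow> nat \<Rightarrow> real"
  assumes b: "\<And>k. (\<lambda>n. b k n) \<longlonglongrightarrow> c k" and c: "c \<longlonglongrightarrow> L"
    and approx: "\<And>k n. \<bar>a n - b k n\<bar> \<le> e k" and e: "e \<longlonglongrightarrow> 0"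
  shows "a \<longlonglongrightarrow> L"
proof (rule LIMSEQ_I)
  fix r :: real
  assume r: "0 < r"
  have "\<forall>\<^sub>F k in sequentially. \<bar>c k - L\<bar> < r / 3 \<and> \<bar>e k\<bar> < r / 3"
    using c[unfolded tendsto_iff, rule_format, of "r / 3"] e[unfolded tendsto_iff, rule_format, of "r / 3"] r
    by (intro eventually_conj) (simp_all add: dist_real_def)
  then obtain k where k: "\<bar>c k - L\<bar> < r / 3" "\<bar>e k\<bar> < r / 3"
    using eventually_happens'[OF sequentially_bot] by blast
  obtain N where N: "\<forall>n\<ge>N. \<bar>b k n - c k\<bar> < r / 3"
    using LIMSEQ_D[OF b[of k], of "r / 3"] r by auto
  have "\<bar>a n - L\<bar> < r" if "N \<le> n" for n
    using N[rule_format, OF that] k approx[of n k] by linarith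
  then show "\<exists>N. \<forall>n\<ge>N. norm (a n - L) < r"
    by auto
qed

context real_distribution
begin

lemma borel_measurable_distribution: "f \<in> borel_measurable borel \<Longrightarrow> f \<in> borel_measurable M"
  by (subst measurable_cong_sets[OF events_eq_borel refl])

lemma integrable_min_const:
  fixes f :: "real \<Rightarrow> real"
  assumes "f \<in> borel_measurable borel" "\<And>y. 0 \<le> f y" "0 \<le> K"
  shows "integrable M (\<lambda>y. min (f y) K)"
  using assms by (intro integrable_const_bound[where B = K] borel_measurable_distribution) auto

lemma integral_truncation_le:
  fixes f :: "real \<Rightarrow> real"
  assumes f: "f \<in> borel_measurable borel" "\<And>y. 0 \<le> f y"
    and sq: "integrable M (\<lambda>y. (f y)\<^sup>2)" and K: "0 < K"
  shows "(\<integral>y. min (f y) K \<partial>M) \<le> 1 + (\<integral>y. (f y)\<^sup>2 \<partial>M)"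
    and "\<bar>(\<integral>y. f y \<partial>M) - (\<integral>y. min (f y) K \<partial>M)\<bar> \<le> (\<integral>y. (f y)\<^sup>2 \<partial>M) / K"
proof -
  have f_le: "f y \<le> 1 + (f y)\<^sup>2" for y
    using power2_diff[of "f y" 1] zero_le_power2[of "f y - 1"] f(2)[of y] by simp
  have int_sq1: "integrable M (\<lambda>y. 1 + (f y)\<^sup>2)"
    using sq by simp
  have int_f: "integrable M f"
  proof (rule Bochner_Integration.integrable_bound[OF int_sq1])
    show "f \<in> borel_measurable M"
      using f(1) by (rule borel_measurable_distribution)
    show "AE y in M. norm (f y) \<le> norm (1 + (f y)\<^sup>2)"
      using f(2) f_le by (intro AE_I2) (simp add: add_nonneg_nonneg)
  qed
  have int_min: "integrable M (\<lambda>y. min (f y) K)"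
    using f K by (intro integrable_min_const) auto
  have "(\<integral>y. min (f y) K \<partial>M) \<le> (\<integral>y. 1 + (f y)\<^sup>2 \<partial>M)"
    using int_min int_sq1 f_le by (intro integral_mono) (auto intro: min.coboundedI1)
  also have "\<dots> = 1 + (\<integral>y. (f y)\<^sup>2 \<partial>M)"
    using sq prob_space by simp
  finally show "(\<integral>y. min (f y) K \<partial>M) \<le> 1 + (\<integral>y. (f y)\<^sup>2 \<partial>M)" .
  have "f y - min (f y) K \<le> (f y)\<^sup>2 / K" for y
  proof (cases "f y \<le> K")
    case False
    then have "f y * K \<le> (f y)\<^sup>2"
      unfolding power2_eq_square using K by (intro mult_left_mono) auto
    then have "f y \<le> (f y)\<^sup>2 / K"
      using K by (simp add: field_simps)
    with False K show ?thesis
      by simp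
  qed (use K in simp)
  then have "(\<integral>y. f y - min (f y) K \<partial>M) \<le> (\<integral>y. (f y)\<^sup>2 / K \<partial>M)"
    using int_f int_min sq by (intro integral_mono) auto
  moreover have "0 \<le> (\<integral>y. f y - min (f y) K \<partial>M)"
    by (intro integral_nonneg_AE) auto
  ultimately show "\<bar>(\<integral>y. f y \<partial>M) - (\<integral>y. min (f y) K \<partial>M)\<bar> \<le> (\<integral>y. (f y)\<^sup>2 \<partial>M) / K"
    using int_f int_min by simp
qed

end

text \<open>Truncating \<open>f\<close> at level \<open>k + 1\<close> gives bounded continuous functions, to which weak convergence
  applies, and the bound on \<open>f\<^sup>2\<close> makes the truncation error \<open>O(1/k)\<close> uniformly in \<open>n\<close>.\<close>
lemma weak_conv_imp_integral_conv_square_bounded: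
  fixes \<mu> :: "nat \<Rightarrow> real measure" and M :: "real measure" and f :: "real \<Rightarrow> real"
  assumes distr: "\<And>n. real_distribution (\<mu> n)" "real_distribution M" and conv: "weak_conv_m \<mu> M"
    and f: "continuous_on UNIV f" "\<And>y. 0 \<le> f y"
    and sq: "\<And>n. integrable (\<mu> n) (\<lambda>y. (f y)\<^sup>2)" "\<And>n. (\<integral>y. (f y)\<^sup>2 \<partial>\<mu> n) \<le> D"
  shows "integrable M f" "(\<lambda>n. \<integral>y. f y \<partial>\<mu> n) \<longlonglongrightarrow> (\<integral>y. f y \<partial>M)"
proof -
  define g where "g k y = min (f y) (real k + 1)" for k y
  have f_meas: "f \<in> borel_measurable borel"
    by (rule borel_measurable_continuous_onI[OF f(1)])
  note truncation = real_distribution.integral_truncation_le[OF distr(1) f_meas f(2) sq(1)]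
  have weak: "(\<lambda>n. \<integral>y. g k y \<partial>\<mu> n) \<longlonglongrightarrow> (\<integral>y. g k y \<partial>M)" for k
    using distr conv f by (intro weak_conv_imp_integral_bdd_continuous_conv[where B = "real k + 1"])
      (auto simp: g_def continuous_on_eq_continuous_at intro: continuous_intros)
  have tail: "\<bar>(\<integral>y. f y \<partial>\<mu> n) - (\<integral>y. g k y \<partial>\<mu> n)\<bar> \<le> D / (real k + 1)" for k n
    using truncation(2)[of "real k + 1" n] divide_right_mono[OF sq(2)[of n], of "real k + 1"]
    unfolding g_def by linarith
  have "integral\<^sup>L M (g k) \<le> 1 + D" for k
  proof (rule LIMSEQ_le_const2[OF weak])
    have "(\<integral>y. g k y \<partial>\<mu> n) \<le> 1 + D" for n
      using truncation(1)[of "real k + 1" n] sq(2)[of n] unfolding g_def by simp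
    then show "\<exists>N. \<forall>n\<ge>N. (\<integral>y. g k y \<partial>\<mu> n) \<le> 1 + D"
      by blast
  qed
  moreover have int_g: "integrable M (g k)" for k
    unfolding g_def using f f_meas by (intro real_distribution.integrable_min_const[OF distr(2)]) auto
  then have "incseq (\<lambda>k. integral\<^sup>L M (g k))"
    by (intro incseq_SucI integral_mono) (auto simp: g_def)
  ultimately have lim: "(\<lambda>k. integral\<^sup>L M (g k)) \<longlonglongrightarrow> (SUP k. integral\<^sup>L M (g k))"
    by (intro LIMSEQ_incseq_SUP bdd_aboveI2) auto
  have "(\<lambda>k. g k y) \<longlonglongrightarrow> f y" for y
  proof (rule tendsto_eventually)
    obtain N :: nat where "f y \<le> real N"
      using real_arch_simple by blast
    then show "\<forall>\<^sub>F k in sequentially. g k y = f y"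
      by (intro eventually_sequentiallyI[of N]) (auto simp: g_def)
  qed
  moreover have "mono (\<lambda>k. g k y)" for y
    by (auto simp: g_def mono_def min_def)
  ultimately have "integrable M f" "integral\<^sup>L M f = (SUP k. integral\<^sup>L M (g k))"
    using integral_monotone_convergence_nonneg[OF int_g _ _ _ lim
        real_distribution.borel_measurable_distribution[OF distr(2) f_meas]] f(2)
    by (auto simp: g_def)
  moreover have "(\<lambda>k. D / (real k + 1)) \<longlonglongrightarrow> 0"
    using LIMSEQ_Suc[OF lim_const_over_n[of D]] by (simp add: add.commute)
  ultimately show "integrable M f" and "(\<lambda>n. \<integral>y. f y \<partial>\<mu> n) \<longlonglongrightarrow> (\<integral>y. f y \<partial>M)"
    using tendsto_of_uniform_approximation[OF weak lim tail] by auto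
qed

theorem theorem7p1:
  fixes M :: "real measure" and lam :: real
  assumes "real_distribution M"
    and "weak_conv_m qs_normalized_law M"
  shows "mono (\<lambda>n. measure_pmf.expectation (qs_comparisons n) (\<lambda>x. exp (lam * qs_hatY n x)))
    \<and> integrable M (\<lambda>y. exp (lam * y))
    \<and> (\<lambda>n. measure_pmf.expectation (qs_comparisons n) (\<lambda>x. exp (lam * qs_hatY n x)))
        \<longlonglongrightarrow> (\<integral>y. exp (lam * y) \<partial>M)
    \<and> (\<forall>n. measure_pmf.expectation (qs_comparisons n) (\<lambda>x. exp (lam * qs_hatY n x))
           \<le> (\<integral>y. exp (lam * y) \<partial>M))"
proof -
  obtain B where "\<And>n. qs_mgf n ((1 + 1 / real n) * (2 * lam)) \<le> B"
    using qs_mgf_rescale_bounded by metis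
  then have "(\<integral>y. (exp (lam * y))\<^sup>2 \<partial>qs_normalized_law n) \<le> B" for n
    using integral_exp_qs_normalized_law[of n "2 * lam"] by (simp add: exp_double[symmetric] mult.assoc)
  from weak_conv_imp_integral_conv_square_bounded[OF real_distribution_qs_normalized_law assms
      continuous_on_exp[OF continuous_on_mult_left[OF continuous_on_id]] _ _ this]
  have integrable: "integrable M (\<lambda>y. exp (lam * y))"
    and law: "(\<lambda>n. qs_mgf n ((1 + 1 / real n) * lam)) \<longlonglongrightarrow> (\<integral>y. exp (lam * y) \<partial>M)"
    by (simp_all add: integrable_qs_normalized_law integral_exp_qs_normalized_law)
  have "(\<lambda>n. qs_mgf n lam) \<longlonglongrightarrow> (\<integral>y. exp (lam * y) \<partial>M)"
    using tendsto_diff[OF law qs_mgf_rescale_tendsto[of lam]] by simp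
  with incseq_qs_mgf[of lam] integrable show ?thesis
    unfolding qs_mgf_def[symmetric] using incseq_le by blast
qed

end
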